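(* Let $|\Psi\rangle,|\Psi'\rangle\in\mathbb C^{I_1}\otimes\mathbb C^{I_2}\otimes\mathbb C^{I_3}\otimes\mathbb C^{I_4}$ be nonzero four-partite states. Let $r$ and $r'$ be the ranks of their $(12)(34)$ matrices. Let $(\Psi_u,\Psi_\lambda,\Psi_v)$ and $(\Psi_{u'},\Psi_{\lambda'},\Psi_{v'})$ be their triple-state sets with respect to the bipartition $(12)(34)$. Then $|\Psi\rangle$ and $|\Psi'\rangle$ are SLOCC equivalent if and only if $r=r'$ and there exist invertible matrices $A_1\in\mathbb C^{I_1\times I_1}$, $A_2\in\mathbb C^{I_2\times I_2}$, $A_3\in\mathbb C^{I_3\times I_3}$, $A_4\in\mathbb C^{I_4\times I_4}$ and $P,Q\in\mathbb C^{r\times r}$ such that $$|\Psi_{u'}\rangle=(P\otimes A_1\otimes A_2)|\Psi_u\rangle,\qquad |\Psi_{v'}\rangle=(Q\otimes A_3^*\otimes A_4^* )|\Psi_v\rangle,\qquad (P^{\mathrm T}\otimes Q^{\dagger})|\Psi_{\lambda'}\rangle=|\Psi_\lambda\rangle .$$ Moreover, when these hold, $|\Psi'\rangle=(A_1\otimes A_2\otimes A_3\otimes A_4)|\Psi\rangle$.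
   Context: **SLOCC equivalence.** Two $N$-partite states $|\Psi'\rangle,|\Psi\rangle$ are SLOCC equivalent if $|\Psi'\rangle=A_1\otimes\cdots\otimes A_N|\Psi\rangle$ for invertible matrices $A_j$. **Bipartite states as matrices.** A bipartite state $\sum_{i,j}\psi_{ij}|i\rangle|j\rangle$ is identified with the matrix $(\psi_{ij})$. Then $(X\otimes Y)$ acts as $\psi\mapsto X\psi Y^{\mathrm T}$. **Tripartite states as tuples.** A tuple $(\Gamma_1,\dots,\Gamma_r)$ with $\Gamma_k\in\mathbb C^{m\times n}$ denotes the tripartite state $$\sum_{k}\sum_{i,j}(\Gamma_k)_{ij}|k\rangle|i\rangle|j\rangle\in\mathbb C^r\otimes\mathbb C^m\otimes\mathbb C^n.$$ **The $(12)(34)$ matrix.** For $|\Psi\rangle=\sum\psi_{i_1i_2i_3i_4}|i_1i_2i_3i_4\rangle$, its $(12)(34)$ matrix is the $I_1I_2\times I_3I_4$ matrix $M$ with rows indexed by pairs $(i_1,i_2)$, columns indexed by pairs $(i_3,i_4)$, and entries $M_{(i_1i_2),(i_3i_4)}=\psi_{i_1i_2i_3i_4}$. **Triple-state set.** Take a singular value decomposition $M=U\Lambda V^{\dagger}$ with $U,V$ unitary. Let $r=\operatorname{rank}M$, and let $\lambda_1,\dots,\lambda_r>0$ be the nonzero singular values with corresponding left singular vectors $\vec u_1,\dots,\vec u_r\in\mathbb C^{I_1I_2}$ and right singular vectors $\vec v_1,\dots,\vec v_r\in\mathbb C^{I_3I_4}$. - $\Psi_u=(\Gamma^u_1,\dots,\Gamma^u_r)$,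 where $\Gamma^u_k\in\mathbb C^{I_1\times I_2}$ has $(i_1,i_2)$ entry equal to the $(i_1,i_2)$-indexed component of $\vec u_k$. This is an $r\times I_1\times I_2$ tripartite state. - $\Psi_v=(\Gamma^v_1,\dots,\Gamma^v_r)$, where $\Gamma^v_k\in\mathbb C^{I_3\times I_4}$ has $(i_3,i_4)$ entry equal to the $(i_3,i_4)$-indexed component of $\vec v_k$. This is an $r\times I_3\times I_4$ tripartite state. - $\Psi_\lambda=\operatorname{diag}(\lambda_1,\dots,\lambda_r)$, an $r\times r$ bipartite state. The triple-state set is $(\Psi_u,\Psi_\lambda,\Psi_v)$. It is defined relative to a fixed choice of SVD; the statement holds for any such choice. **Notation.** $A^*$ denotes the entrywise complex conjugate and $A^\dagger=(A^* )^{\mathrm T}$. *)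

theory Defs
  imports "Jordan_Normal_Form.DL_Rank"
begin

text \<open>Four-partite states in C^I1 (x) C^I2 (x) C^I3 (x) C^I4 are coefficient functions
  psi i1 i2 i3 i4 (only values with i_k < I_k matter); tripartite states in
  C^r (x) C^m (x) C^n are functions Gamma k i j (k < r, i < m, j < n);
  bipartite states are matrices.\<close>

definition state_eq4 :: "nat \<Rightarrow> nat \<Rightarrow> nat \<Rightarrow> nat \<Rightarrow>
    (nat \<Rightarrow> nat \<Rightarrow> nat \<Rightarrow> nat \<Rightarrow> complex) \<Rightarrow> (nat \<Rightarrow> nat \<Rightarrow> nat \<Rightarrow> nat \<Rightarrow> complex) \<Rightarrow> bool" where
  "state_eq4 I1 I2 I3 I4 \<phi> \<psi> \<longleftrightarrow>
     (\<forall>i1<I1. \<forall>i2<I2. \<forall>i3<I3. \<forall>i4<I4. \<phi> i1 i2 i3 i4 = \<psi> i1 i2 i3 i4)"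

definition nonzero4 :: "nat \<Rightarrow> nat \<Rightarrow> nat \<Rightarrow> nat \<Rightarrow> (nat \<Rightarrow> nat \<Rightarrow> nat \<Rightarrow> nat \<Rightarrow> complex) \<Rightarrow> bool" where
  "nonzero4 I1 I2 I3 I4 \<psi> \<longleftrightarrow> (\<exists>i1<I1. \<exists>i2<I2. \<exists>i3<I3. \<exists>i4<I4. \<psi> i1 i2 i3 i4 \<noteq> 0)"

definition apply4 :: "complex mat \<Rightarrow> complex mat \<Rightarrow> complex mat \<Rightarrow> complex mat \<Rightarrow>
    (nat \<Rightarrow> nat \<Rightarrow> nat \<Rightarrow> nat \<Rightarrow> complex) \<Rightarrow> (nat \<Rightarrow> nat \<Rightarrow> nat \<Rightarrow> nat \<Rightarrow> complex)" where
  "apply4 A1 A2 A3 A4 \<psi> = (\<lambda>i1 i2 i3 i4.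
     \<Sum>j1<dim_col A1. \<Sum>j2<dim_col A2. \<Sum>j3<dim_col A3. \<Sum>j4<dim_col A4.
       A1 $$ (i1, j1) * A2 $$ (i2, j2) * A3 $$ (i3, j3) * A4 $$ (i4, j4) * \<psi> j1 j2 j3 j4)"

definition SLOCC_equiv4 :: "nat \<Rightarrow> nat \<Rightarrow> nat \<Rightarrow> nat \<Rightarrow>
    (nat \<Rightarrow> nat \<Rightarrow> nat \<Rightarrow> nat \<Rightarrow> complex) \<Rightarrow> (nat \<Rightarrow> nat \<Rightarrow> nat \<Rightarrow> nat \<Rightarrow> complex) \<Rightarrow> bool" where
  "SLOCC_equiv4 I1 I2 I3 I4 \<psi>' \<psi> \<longleftrightarrow>
     (\<exists>A1 A2 A3 A4.
        A1 \<in> carrier_mat I1 I1 \<and> invertible_mat A1 \<and>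
        A2 \<in> carrier_mat I2 I2 \<and> invertible_mat A2 \<and>
        A3 \<in> carrier_mat I3 I3 \<and> invertible_mat A3 \<and>
        A4 \<in> carrier_mat I4 I4 \<and> invertible_mat A4 \<and>
        state_eq4 I1 I2 I3 I4 \<psi>' (apply4 A1 A2 A3 A4 \<psi>))"

definition mat1234 :: "nat \<Rightarrow> nat \<Rightarrow> nat \<Rightarrow> nat \<Rightarrow> (nat \<Rightarrow> nat \<Rightarrow> nat \<Rightarrow> nat \<Rightarrow> complex) \<Rightarrow> complex mat" where
  "mat1234 I1 I2 I3 I4 \<psi> =
     mat (I1 * I2) (I3 * I4) (\<lambda>(r, c). \<psi> (r div I2) (r mod I2) (c div I4) (c mod I4))"

definition conj_mat :: "complex mat \<Rightarrow> complex mat" where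
  "conj_mat A = map_mat cnj A"

definition adjoint :: "complex mat \<Rightarrow> complex mat" where
  "adjoint A = transpose_mat (conj_mat A)"

definition unitary :: "nat \<Rightarrow> complex mat \<Rightarrow> bool" where
  "unitary n U \<longleftrightarrow> U \<in> carrier_mat n n \<and> U * adjoint U = 1\<^sub>m n \<and> adjoint U * U = 1\<^sub>m n"

text \<open>A singular value decomposition M = U Lambda V^dagger with U, V unitary, where the
  nonzero singular values lam 0, ..., lam (r-1) > 0 sit at diagonal positions 0..r-1
  and all other entries of Lambda are zero (any SVD can be so arranged by relabelling).\<close>
definition is_svd :: "complex mat \<Rightarrow> complex mat \<Rightarrow> complex mat \<Rightarrow> nat \<Rightarrow> (nat \<Rightarrow> real) \<Rightarrow> bool" where
  "is_svd M U V r lam \<longleftrightarrow>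
     unitary (dim_row M) U \<and> unitary (dim_col M) V \<and>
     r \<le> dim_row M \<and> r \<le> dim_col M \<and> (\<forall>k<r. lam k > 0) \<and>
     M = U * mat (dim_row M) (dim_col M)
              (\<lambda>(i, j). if i = j \<and> i < r then complex_of_real (lam i) else 0) * adjoint V"

definition psi_u :: "nat \<Rightarrow> complex mat \<Rightarrow> (nat \<Rightarrow> nat \<Rightarrow> nat \<Rightarrow> complex)" where
  "psi_u I2 U = (\<lambda>k i1 i2. U $$ (i1 * I2 + i2, k))"

definition psi_v :: "nat \<Rightarrow> complex mat \<Rightarrow> (nat \<Rightarrow> nat \<Rightarrow> nat \<Rightarrow> complex)" where
  "psi_v I4 V = (\<lambda>k i3 i4. V $$ (i3 * I4 + i4, k))"

definition psi_lam :: "nat \<Rightarrow> (nat \<Rightarrow> real) \<Rightarrow> complex mat" where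
  "psi_lam r lam = mat r r (\<lambda>(i, j). if i = j then complex_of_real (lam i) else 0)"

definition state_eq3 :: "nat \<Rightarrow> nat \<Rightarrow> nat \<Rightarrow>
    (nat \<Rightarrow> nat \<Rightarrow> nat \<Rightarrow> complex) \<Rightarrow> (nat \<Rightarrow> nat \<Rightarrow> nat \<Rightarrow> complex) \<Rightarrow> bool" where
  "state_eq3 r m n \<phi> \<psi> \<longleftrightarrow> (\<forall>k<r. \<forall>i<m. \<forall>j<n. \<phi> k i j = \<psi> k i j)"

definition apply3 :: "complex mat \<Rightarrow> complex mat \<Rightarrow> complex mat \<Rightarrow>
    (nat \<Rightarrow> nat \<Rightarrow> nat \<Rightarrow> complex) \<Rightarrow> (nat \<Rightarrow> nat \<Rightarrow> nat \<Rightarrow> complex)" where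
  "apply3 X Y Z \<Gamma> = (\<lambda>k i j.
     \<Sum>k'<dim_col X. \<Sum>i'<dim_col Y. \<Sum>j'<dim_col Z.
       X $$ (k, k') * Y $$ (i, i') * Z $$ (j, j') * \<Gamma> k' i' j')"

definition apply2 :: "complex mat \<Rightarrow> complex mat \<Rightarrow> complex mat \<Rightarrow> complex mat" where
  "apply2 X Y \<psi> = X * \<psi> * transpose_mat Y"

end

theory Submission
  imports Defs
begin

text \<open>With K = A1 (x) A2 and L = A3 (x) A4, SLOCC equivalence says M' = K M L^T for the (12)(34)
  matrices. Write both in thin SVD form M = U \<Lambda> V^H, with U, V having orthonormal columns and
  \<Lambda> positive diagonal. Since U' = M' V' \<Lambda>'^-1, the columns of U' lie in the span of the columns
  of K U, i.e. U' = K U X; the same argument for M = K^-1 M' L^-T gives U = K^-1 U' X', and the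
  orthonormality of the columns makes X and X' mutually inverse, which forces r = r'. Applying
  this to the adjoints M'^H = conj(L) M^H K^H gives V' = conj(L) V Y with Y invertible, and then
  cancelling K U on the left and V^H L^T on the right in M' = K M L^T leaves X \<Lambda>' Y^H = \<Lambda>.
  Conversely these three relations multiply out to M' = K M L^T. Taking P = X^T and Q = Y^T turns
  them into the stated relations between the triple-state sets.\<close>

lemma sum_lessThan_mult_pairs:
  fixes f :: "nat \<Rightarrow> 'a::comm_monoid_add"
  shows "(\<Sum>t<a * b. f t) = (\<Sum>i<a. \<Sum>j<b. f (i * b + j))"
  by (simp add: sum.nat_group[symmetric] sum.atLeastLessThan_shift_0 atLeast0LessThan add.commute)

lemma pair_index_less:
  assumes "i < a" and "j < b"
  shows "i * b + j < a * (b::nat)"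
proof -
  have "i * b + j < Suc i * b" using assms(2) by simp
  also have "\<dots> \<le> a * b" using mult_le_mono1[OF Suc_leI[OF assms(1)]] .
  finally show ?thesis .
qed

lemma pair_index_cases:
  assumes "x < a * b"
  obtains i j where "x = i * b + j" "i < a" "j < (b::nat)"
  using assms by (metis div_mult_mod_eq less_mult_imp_div_less mod_less_divisor mult_zero_right
      not_gr_zero not_less_zero)

lemma pair_index_div_less: "x < a * b \<Longrightarrow> x div b < (a::nat)"
  by (simp add: less_mult_imp_div_less)

lemma pair_index_mod_less: "x < a * b \<Longrightarrow> x mod b < (b::nat)"
  by (cases "b = 0") auto

lemma mult_assoc_dims:
  "dim_col A = dim_row B \<Longrightarrow> dim_col B = dim_row C \<Longrightarrow> A * B * C = A * (B * (C :: 'a::semiring_0 mat))"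
  by (rule assoc_mult_mat[of A "dim_row A" "dim_col A" B "dim_col B" C "dim_col C"]) auto

lemma index_mult_mat_sum:
  "i < dim_row A \<Longrightarrow> j < dim_col B \<Longrightarrow> dim_col A = dim_row B \<Longrightarrow>
   (A * B) $$ (i, j) = (\<Sum>k<dim_row B. A $$ (i, k) * B $$ (k, j))"
  by (simp add: scalar_prod_def atLeast0LessThan)

lemma index_mult_transpose_sandwich:
  assumes "A \<in> carrier_mat n n'" "M \<in> carrier_mat n' m'" "B \<in> carrier_mat m m'"
    and "x < n" "y < m"
  shows "(A * M * transpose_mat B) $$ (x, y) = (\<Sum>s<n'. \<Sum>t<m'. A $$ (x, s) * M $$ (s, t) * B $$ (y, t))"
proof -
  have "(A * M * transpose_mat B) $$ (x, y) = (\<Sum>t<m'. (A * M) $$ (x, t) * B $$ (y, t))"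
    using assms by (subst index_mult_mat_sum) (auto intro!: sum.cong simp del: index_mult_mat(1))
  also have "\<dots> = (\<Sum>t<m'. \<Sum>s<n'. A $$ (x, s) * M $$ (s, t) * B $$ (y, t))"
    using assms by (intro sum.cong refl) (simp add: index_mult_mat_sum sum_distrib_right del: index_mult_mat(1))
  finally show ?thesis by (simp add: sum.swap[of _ "{..<m'}"])
qed

lemma invertible_mat_iff_two_sided:
  assumes "A \<in> carrier_mat n n"
  shows "invertible_mat A \<longleftrightarrow> (\<exists>B \<in> carrier_mat n n. A * B = 1\<^sub>m n \<and> B * A = 1\<^sub>m n)"
proof
  assume "invertible_mat A"
  then obtain B where AB: "A * B = 1\<^sub>m n" and BA: "B * A = 1\<^sub>m (dim_row B)"
    using assms unfolding invertible_mat_def inverts_mat_def by auto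
  have "dim_row B = n" using arg_cong[OF BA, of dim_col] assms by simp
  moreover have "dim_col B = n" using arg_cong[OF AB, of dim_col] by simp
  ultimately show "\<exists>B \<in> carrier_mat n n. A * B = 1\<^sub>m n \<and> B * A = 1\<^sub>m n"
    using AB BA by auto
qed (use assms in \<open>auto simp: invertible_mat_def inverts_mat_def\<close>)

lemma invertible_transpose_mat:
  fixes A :: "'a::comm_semiring_1 mat"
  assumes "A \<in> carrier_mat n n" "invertible_mat A"
  shows "invertible_mat (transpose_mat A)"
proof -
  obtain B where B: "B \<in> carrier_mat n n" "A * B = 1\<^sub>m n" "B * A = 1\<^sub>m n"
    using assms invertible_mat_iff_two_sided by metis
  have "transpose_mat A * transpose_mat B = transpose_mat (B * A)"
    "transpose_mat B * transpose_mat A = transpose_mat (A * B)"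
    using transpose_mult[OF B(1) assms(1)] transpose_mult[OF assms(1) B(1)] by simp_all
  then have "transpose_mat A * transpose_mat B = 1\<^sub>m n" "transpose_mat B * transpose_mat A = 1\<^sub>m n"
    using B by simp_all
  then show ?thesis
    using assms(1) B(1) invertible_mat_iff_two_sided[of "transpose_mat A" n] by auto
qed

text \<open>Compare the traces of AB and BA.\<close>
lemma two_sided_inverse_square:
  fixes A :: "'a::{comm_ring_1, ring_char_0} mat"
  assumes "A \<in> carrier_mat a b" "B \<in> carrier_mat b a" "A * B = 1\<^sub>m a" "B * A = 1\<^sub>m b"
  shows "a = b"
proof -
  have "(of_nat a :: 'a) = (\<Sum>i<a. (A * B) $$ (i, i))"
    using assms(3) by simp
  also have "\<dots> = (\<Sum>i<a. \<Sum>j<b. A $$ (i, j) * B $$ (j, i))"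
    using assms(1,2) by (intro sum.cong refl) (simp add: index_mult_mat_sum del: index_mult_mat(1))
  also have "\<dots> = (\<Sum>j<b. \<Sum>i<a. B $$ (j, i) * A $$ (i, j))"
    by (subst sum.swap) (simp add: mult.commute)
  also have "\<dots> = (\<Sum>j<b. (B * A) $$ (j, j))"
    using assms(1,2) by (intro sum.cong refl) (simp add: index_mult_mat_sum del: index_mult_mat(1))
  also have "\<dots> = of_nat b"
    using assms(4) by simp
  finally show ?thesis by simp
qed

section \<open>Kronecker products\<close>

text \<open>Row (i, j) of the product is numbered i * b + j, as in mat1234.\<close>
definition kron :: "nat \<Rightarrow> nat \<Rightarrow> 'a::semiring_0 mat \<Rightarrow> 'a mat \<Rightarrow> 'a mat" where
  "kron a b A B = mat (a * b) (a * b) (\<lambda>(i, j). A $$ (i div b, j div b) * B $$ (i mod b, j mod b))"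

lemma kron_carrier [simp]: "kron a b A B \<in> carrier_mat (a * b) (a * b)"
  and dim_kron [simp]: "dim_row (kron a b A B) = a * b" "dim_col (kron a b A B) = a * b"
  by (simp_all add: kron_def)

lemma index_kron_pair [simp]:
  "i < a \<Longrightarrow> j < b \<Longrightarrow> i' < a \<Longrightarrow> j' < b \<Longrightarrow>
   kron a b A B $$ (i * b + j, i' * b + j') = A $$ (i, i') * B $$ (j, j')"
  by (simp add: kron_def pair_index_less)

lemma kron_mult:
  fixes A C :: "'a::comm_semiring_0 mat"
  assumes "A \<in> carrier_mat a a" "C \<in> carrier_mat a a" "B \<in> carrier_mat b b" "D \<in> carrier_mat b b"
  shows "kron a b A B * kron a b C D = kron a b (A * C) (B * D)"
proof (rule eq_matI)
  fix x y assume "x < dim_row (kron a b (A * C) (B * D))" "y < dim_col (kron a b (A * C) (B * D))"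
  then have x: "x < a * b" and y: "y < a * b" by auto
  have "(kron a b A B * kron a b C D) $$ (x, y)
      = (\<Sum>s<a. \<Sum>t<b. A $$ (x div b, s) * C $$ (s, y div b) * (B $$ (x mod b, t) * D $$ (t, y mod b)))"
    using x y by (simp add: index_mult_mat_sum sum_lessThan_mult_pairs kron_def pair_index_less
        mult.assoc mult.left_commute del: index_mult_mat(1))
  also have "\<dots> = (A * C) $$ (x div b, y div b) * (B * D) $$ (x mod b, y mod b)"
    using assms x y pair_index_div_less pair_index_mod_less
    by (simp add: index_mult_mat_sum sum_product del: index_mult_mat(1))
  finally show "(kron a b A B * kron a b C D) $$ (x, y) = kron a b (A * C) (B * D) $$ (x, y)"
    using x y by (simp add: kron_def)
qed auto

lemma kron_one: "kron a b (1\<^sub>m a) (1\<^sub>m b) = (1\<^sub>m (a * b) :: 'a::semiring_1 mat)"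
proof (rule eq_matI)
  fix x y assume "x < dim_row (1\<^sub>m (a * b) :: 'a mat)" "y < dim_col (1\<^sub>m (a * b) :: 'a mat)"
  then have x: "x < a * b" and y: "y < a * b" by auto
  have "(x div b = y div b \<and> x mod b = y mod b) \<longleftrightarrow> x = y"
    by (metis div_mult_mod_eq)
  then show "kron a b (1\<^sub>m a) (1\<^sub>m b) $$ (x, y) = (1\<^sub>m (a * b) :: 'a mat) $$ (x, y)"
    using x y by (auto simp: kron_def pair_index_div_less pair_index_mod_less)
qed auto

lemma invertible_kron:
  fixes A :: "'a::comm_semiring_1 mat"
  assumes "A \<in> carrier_mat a a" "invertible_mat A" "B \<in> carrier_mat b b" "invertible_mat B"
  shows "invertible_mat (kron a b A B)"
proof -
  obtain A' B' where "A' \<in> carrier_mat a a" "A * A' = 1\<^sub>m a" "A' * A = 1\<^sub>m a"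
    and "B' \<in> carrier_mat b b" "B * B' = 1\<^sub>m b" "B' * B = 1\<^sub>m b"
    using assms invertible_mat_iff_two_sided by metis
  then have "kron a b A B * kron a b A' B' = 1\<^sub>m (a * b)" "kron a b A' B' * kron a b A B = 1\<^sub>m (a * b)"
    using assms by (simp_all add: kron_mult kron_one)
  then show ?thesis
    using invertible_mat_iff_two_sided[OF kron_carrier] kron_carrier by blast
qed

interpretation cnj_hom: semiring_hom cnj
  by unfold_locales auto

lemma conj_mat_carrier [simp]: "conj_mat A \<in> carrier_mat n m \<longleftrightarrow> A \<in> carrier_mat n m"
  and dim_conj_mat [simp]: "dim_row (conj_mat A) = dim_row A" "dim_col (conj_mat A) = dim_col A"
  by (simp_all add: conj_mat_def)

lemma adjoint_carrier [simp]: "adjoint A \<in> carrier_mat n m \<longleftrightarrow> A \<in> carrier_mat m n"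
  and dim_adjoint [simp]: "dim_row (adjoint A) = dim_col A" "dim_col (adjoint A) = dim_row A"
  by (simp_all add: adjoint_def)

lemma index_adjoint [simp]: "i < dim_col A \<Longrightarrow> j < dim_row A \<Longrightarrow> adjoint A $$ (i, j) = cnj (A $$ (j, i))"
  by (simp add: adjoint_def conj_mat_def)

lemma conj_mat_mult: "dim_col A = dim_row B \<Longrightarrow> conj_mat (A * B) = conj_mat A * conj_mat B"
  unfolding conj_mat_def by (rule cnj_hom.mat_hom_mult) auto

lemma adjoint_mult: "dim_col A = dim_row B \<Longrightarrow> adjoint (A * B) = adjoint B * adjoint A"
  unfolding adjoint_def conj_mat_mult
  by (rule transpose_mult[of _ "dim_row A" "dim_col A" _ "dim_col B"]) (auto simp: conj_mat_def)

lemma conj_mat_one [simp]: "conj_mat (1\<^sub>m n) = 1\<^sub>m n"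
  unfolding conj_mat_def by (rule cnj_hom.mat_hom_one)

lemma adjoint_transpose [simp]: "adjoint (transpose_mat A) = conj_mat A"
  and transpose_adjoint [simp]: "transpose_mat (adjoint A) = conj_mat A"
  and transpose_conj_mat [simp]: "transpose_mat (conj_mat A) = adjoint A"
  and conj_mat_transpose [simp]: "conj_mat (transpose_mat A) = adjoint A"
  and adjoint_conj_mat [simp]: "adjoint (conj_mat A) = transpose_mat A"
  and adjoint_adjoint [simp]: "adjoint (adjoint A) = A"
  by (auto simp: adjoint_def conj_mat_def)

lemma conj_mat_kron:
  "A \<in> carrier_mat a a \<Longrightarrow> B \<in> carrier_mat b b \<Longrightarrow>
   conj_mat (kron a b A B) = kron a b (conj_mat A) (conj_mat B)"
  by (rule eq_matI) (auto simp: kron_def conj_mat_def pair_index_div_less pair_index_mod_less)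

lemma invertible_conj_mat:
  assumes "A \<in> carrier_mat n n" "invertible_mat A"
  shows "invertible_mat (conj_mat A)"
proof -
  obtain B where "B \<in> carrier_mat n n" "A * B = 1\<^sub>m n" "B * A = 1\<^sub>m n"
    using assms invertible_mat_iff_two_sided by metis
  then have "conj_mat A * conj_mat B = 1\<^sub>m n" "conj_mat B * conj_mat A = 1\<^sub>m n"
    using assms(1) by (metis conj_mat_mult conj_mat_one carrier_matD)+
  then show ?thesis
    using assms(1) \<open>B \<in> carrier_mat n n\<close> invertible_mat_iff_two_sided[of "conj_mat A" n] by auto
qed

section \<open>Thin singular value decompositions\<close>

definition first_cols :: "nat \<Rightarrow> nat \<Rightarrow> 'a mat \<Rightarrow> 'a mat" where
  "first_cols n r U = mat n r (\<lambda>(i, j). U $$ (i, j))"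

lemma first_cols_carrier [simp]: "first_cols n r U \<in> carrier_mat n r"
  and dim_first_cols [simp]: "dim_row (first_cols n r U) = n" "dim_col (first_cols n r U) = r"
  by (simp_all add: first_cols_def)

lemma isometry_first_cols:
  assumes "unitary n U" "r \<le> n"
  shows "adjoint (first_cols n r U) * first_cols n r U = 1\<^sub>m r"
proof (rule eq_matI)
  fix i j assume "i < dim_row (1\<^sub>m r :: complex mat)" "j < dim_col (1\<^sub>m r :: complex mat)"
  then have i: "i < n" "i < r" and j: "j < n" "j < r" using assms(2) by auto
  have U: "U \<in> carrier_mat n n" and UU: "adjoint U * U = 1\<^sub>m n"
    using assms(1) unfolding unitary_def by auto
  have "(adjoint (first_cols n r U) * first_cols n r U) $$ (i, j) = (adjoint U * U) $$ (i, j)"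
    using U i j by (simp add: index_mult_mat_sum first_cols_def del: index_mult_mat(1))
  then show "(adjoint (first_cols n r U) * first_cols n r U) $$ (i, j) = 1\<^sub>m r $$ (i, j)"
    using i j by (simp add: UU)
qed auto

lemma index_mult_diag_right:
  assumes "x < dim_row A" "dim_col A = n" "c < m"
  shows "(A * mat n m (\<lambda>(i, j). if i = j \<and> i < r then d i else 0)) $$ (x, c)
    = (if c < r \<and> c < n then A $$ (x, c) * d c else 0)"
proof -
  have "{..<n} \<inter> {s. s = c \<and> s < r} = (if c < r \<and> c < n then {c} else {})" by auto
  then show ?thesis
    using assms by (simp add: index_mult_mat_sum if_distrib[of "(*) _"] sum.If_cases del: index_mult_mat(1))
qed

lemma psi_lam_diag: "psi_lam r lam = mat r r (\<lambda>(i, j). if i = j \<and> i < r then complex_of_real (lam i) else 0)"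
  by (rule eq_matI) (auto simp: psi_lam_def)

lemma psi_lam_carrier [simp]: "psi_lam r lam \<in> carrier_mat r r"
  and dim_psi_lam [simp]: "dim_row (psi_lam r lam) = r" "dim_col (psi_lam r lam) = r"
  by (simp_all add: psi_lam_def)

lemma adjoint_psi_lam [simp]: "adjoint (psi_lam r lam) = psi_lam r lam"
  by (rule eq_matI) (auto simp: psi_lam_def)

lemma psi_lam_mult: "psi_lam r f * psi_lam r g = psi_lam r (\<lambda>k. f k * g k)"
  by (rule eq_matI) (auto simp: psi_lam_diag index_mult_diag_right simp del: index_mult_mat(1))

lemma invertible_psi_lam:
  assumes "\<forall>k<r. lam k > 0"
  shows "invertible_mat (psi_lam r lam)"
proof -
  have "psi_lam r (\<lambda>k. lam k * (1 / lam k)) = 1\<^sub>m r" "psi_lam r (\<lambda>k. 1 / lam k * lam k) = 1\<^sub>m r"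
    by (rule eq_matI; use assms in \<open>auto simp: psi_lam_def\<close>)+
  then show ?thesis
    using invertible_mat_iff_two_sided[OF psi_lam_carrier] psi_lam_carrier psi_lam_mult by metis
qed

lemma svd_thin_form:
  assumes U: "U \<in> carrier_mat n n" and V: "V \<in> carrier_mat m m" and "r \<le> n" "r \<le> m"
  shows "U * mat n m (\<lambda>(i, j). if i = j \<and> i < r then complex_of_real (lam i) else 0) * adjoint V
    = first_cols n r U * psi_lam r lam * adjoint (first_cols m r V)" (is "U * ?D * _ = ?Ur * _ * _")
proof (rule eq_matI)
  fix x y assume "x < dim_row (?Ur * psi_lam r lam * adjoint (first_cols m r V))"
    "y < dim_col (?Ur * psi_lam r lam * adjoint (first_cols m r V))"
  then have x: "x < n" and y: "y < m" by auto
  have "(U * ?D * adjoint V) $$ (x, y)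
      = (\<Sum>c<m. if c < r then U $$ (x, c) * complex_of_real (lam c) * cnj (V $$ (y, c)) else 0)"
    using U V x y \<open>r \<le> n\<close>
    by (subst index_mult_mat_sum) (auto intro!: sum.cong simp: index_mult_diag_right simp del: index_mult_mat(1))
  also have "\<dots> = (\<Sum>c<r. U $$ (x, c) * complex_of_real (lam c) * cnj (V $$ (y, c)))"
    using \<open>r \<le> m\<close> by (subst sum.mono_neutral_right[of "{..<m}" "{..<r}"]) auto
  also have "\<dots> = (?Ur * psi_lam r lam * adjoint (first_cols m r V)) $$ (x, y)"
    using x y \<open>r \<le> m\<close> by (subst index_mult_mat_sum)
      (auto intro!: sum.cong simp: psi_lam_diag index_mult_diag_right first_cols_def simp del: index_mult_mat(1))
  finally show "(U * ?D * adjoint V) $$ (x, y) = (?Ur * psi_lam r lam * adjoint (first_cols m r V)) $$ (x, y)" .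
qed (use U V in auto)

lemma is_svd_thin:
  assumes svd: "is_svd M U V r lam" and M: "M \<in> carrier_mat n m"
  shows "M = first_cols n r U * psi_lam r lam * adjoint (first_cols m r V)"
    and "adjoint (first_cols n r U) * first_cols n r U = 1\<^sub>m r"
    and "adjoint (first_cols m r V) * first_cols m r V = 1\<^sub>m r"
    and "invertible_mat (psi_lam r lam)"
proof -
  have dims: "dim_row M = n" "dim_col M = m" using M by auto
  note svd' = svd[unfolded is_svd_def dims]
  then have "U \<in> carrier_mat n n" "V \<in> carrier_mat m m" by (auto simp: unitary_def)
  with svd' show "M = first_cols n r U * psi_lam r lam * adjoint (first_cols m r V)"
    by (simp add: svd_thin_form)
  show "adjoint (first_cols n r U) * first_cols n r U = 1\<^sub>m r"
    "adjoint (first_cols m r V) * first_cols m r V = 1\<^sub>m r"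
    using svd' isometry_first_cols by auto
  show "invertible_mat (psi_lam r lam)"
    using svd' invertible_psi_lam by auto
qed

section \<open>Transferring thin factorizations\<close>

lemma isometry_factor_inverse:
  assumes U: "U \<in> carrier_mat n r" and U': "U' \<in> carrier_mat n r'"
    and K: "K \<in> carrier_mat n n" and K': "K' \<in> carrier_mat n n"
    and X: "X \<in> carrier_mat r r'" and X': "X' \<in> carrier_mat r' r"
    and isometry: "adjoint U * U = 1\<^sub>m r" and inverse: "K' * K = 1\<^sub>m n"
    and "U' = K * U * X" and "U = K' * U' * X'"
  shows "X * X' = 1\<^sub>m r"
proof -
  note carriers = U U' K K' X X'
  have "U = K' * (K * U * X) * X'"
    using assms(9,10) by simp
  also have "\<dots> = (K' * K) * (U * (X * X'))"
    using carriers by (simp add: mult_assoc_dims)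
  finally have "U * (X * X') = U"
    using carriers inverse by simp
  have "X * X' = adjoint U * U * (X * X')"
    using carriers isometry by simp
  also have "\<dots> = adjoint U * (U * (X * X'))"
    using carriers by (simp add: mult_assoc_dims)
  finally show ?thesis
    using \<open>U * (X * X') = U\<close> isometry by simp
qed

locale thin_factorization =
  fixes U V \<Lambda> :: "complex mat" and n m r :: nat
  assumes U_carrier: "U \<in> carrier_mat n r" and V_carrier: "V \<in> carrier_mat m r"
    and \<Lambda>_carrier: "\<Lambda> \<in> carrier_mat r r"
    and U_isometry: "adjoint U * U = 1\<^sub>m r" and V_isometry: "adjoint V * V = 1\<^sub>m r"
    and invertible_\<Lambda>: "invertible_mat \<Lambda>" and hermitian_\<Lambda>: "adjoint \<Lambda> = \<Lambda>"
begin

lemma sandwich_cancel: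
  assumes K: "K \<in> carrier_mat n n" "invertible_mat K" and L: "L \<in> carrier_mat m m" "invertible_mat L"
    and A: "A \<in> carrier_mat r r" and B: "B \<in> carrier_mat r r"
    and eq: "K * U * A * adjoint V * transpose_mat L = K * U * B * adjoint V * transpose_mat L"
  shows "A = B"
proof -
  obtain K' where K': "K' \<in> carrier_mat n n" "K' * K = 1\<^sub>m n"
    using K invertible_mat_iff_two_sided by metis
  obtain L' where L': "L' \<in> carrier_mat m m" "L' * L = 1\<^sub>m m"
    using L invertible_mat_iff_two_sided by metis
  note carriers = U_carrier V_carrier K(1) L(1) K'(1) L'(1)
  have LL': "transpose_mat L * transpose_mat L' = 1\<^sub>m m"
    unfolding transpose_mult[OF L'(1) L(1), symmetric] L'(2) by simp
  have recover: "adjoint U * K' * (K * U * C * adjoint V * transpose_mat L) * transpose_mat L' * V = C"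
    if C: "C \<in> carrier_mat r r" for C
  proof -
    have "adjoint U * K' * (K * U * C * adjoint V * transpose_mat L) * transpose_mat L' * V
        = adjoint U * ((K' * K) * U) * C * (adjoint V * ((transpose_mat L * transpose_mat L') * V))"
      using carriers C by (simp add: mult_assoc_dims)
    also have "\<dots> = C"
      using carriers C K'(2) LL' U_isometry V_isometry by simp
    finally show ?thesis .
  qed
  show ?thesis
    using recover[OF A] recover[OF B] unfolding eq by simp
qed

end

locale thin_factorization_pair =
  F: thin_factorization U V \<Lambda> n m r + F': thin_factorization U' V' \<Lambda>' n m r'
  for U V \<Lambda> U' V' \<Lambda>' :: "complex mat" and n m r r' :: nat
begin

lemma left_factor_transfer:
  assumes K: "K \<in> carrier_mat n n" and L: "L \<in> carrier_mat m m"
    and M': "U' * \<Lambda>' * adjoint V' = K * (U * \<Lambda> * adjoint V) * transpose_mat L"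
  shows "\<exists>X \<in> carrier_mat r r'. U' = K * U * X"
proof -
  obtain \<Lambda>i where \<Lambda>i: "\<Lambda>i \<in> carrier_mat r' r'" "\<Lambda>' * \<Lambda>i = 1\<^sub>m r'"
    using invertible_mat_iff_two_sided[OF F'.\<Lambda>_carrier] F'.invertible_\<Lambda> by blast
  note carriers = F.U_carrier F.V_carrier F.\<Lambda>_carrier F'.U_carrier F'.V_carrier F'.\<Lambda>_carrier K L \<Lambda>i(1)
  have "U' = U' * \<Lambda>' * (adjoint V' * V') * \<Lambda>i"
    using carriers by (simp add: F'.V_isometry mult_assoc_dims \<Lambda>i(2))
  also have "\<dots> = (U' * \<Lambda>' * adjoint V') * V' * \<Lambda>i"
    using carriers by (simp add: mult_assoc_dims)
  also have "\<dots> = K * U * (\<Lambda> * adjoint V * transpose_mat L * V' * \<Lambda>i)"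
    unfolding M' using carriers by (simp add: mult_assoc_dims)
  finally have "U' = K * U * (\<Lambda> * adjoint V * transpose_mat L * V' * \<Lambda>i)" .
  moreover have "\<Lambda> * adjoint V * transpose_mat L * V' * \<Lambda>i \<in> carrier_mat r r'"
    using carriers by auto
  ultimately show ?thesis by blast
qed

lemma left_factor_transfer_invertible:
  assumes K: "K \<in> carrier_mat n n" "invertible_mat K" and L: "L \<in> carrier_mat m m" "invertible_mat L"
    and M': "U' * \<Lambda>' * adjoint V' = K * (U * \<Lambda> * adjoint V) * transpose_mat L"
  shows "\<exists>X \<in> carrier_mat r r'. \<exists>X' \<in> carrier_mat r' r. X * X' = 1\<^sub>m r \<and> X' * X = 1\<^sub>m r' \<and> U' = K * U * X"
proof -
  obtain K' where K': "K' \<in> carrier_mat n n" "K * K' = 1\<^sub>m n" "K' * K = 1\<^sub>m n"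
    using K invertible_mat_iff_two_sided by metis
  obtain L' where L': "L' \<in> carrier_mat m m" "L' * L = 1\<^sub>m m"
    using L invertible_mat_iff_two_sided by metis
  note carriers = F.U_carrier F.V_carrier F.\<Lambda>_carrier F'.U_carrier F'.V_carrier F'.\<Lambda>_carrier K(1) L(1) K'(1) L'(1)
  have LL': "transpose_mat L * transpose_mat L' = 1\<^sub>m m"
    unfolding transpose_mult[OF L'(1) L(1), symmetric] L'(2) by simp
  have "K' * (U' * \<Lambda>' * adjoint V') * transpose_mat L'
      = (K' * K) * (U * \<Lambda> * adjoint V) * (transpose_mat L * transpose_mat L')"
    unfolding M' using carriers by (simp add: mult_assoc_dims)
  also have "\<dots> = U * \<Lambda> * adjoint V"
    using carriers K'(3) LL' by simp
  finally have M: "U * \<Lambda> * adjoint V = K' * (U' * \<Lambda>' * adjoint V') * transpose_mat L'" ..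
  interpret swap: thin_factorization_pair U' V' \<Lambda>' U V \<Lambda> n m r' r
    by (simp add: thin_factorization_pair_def F.thin_factorization_axioms F'.thin_factorization_axioms)
  obtain X where X: "X \<in> carrier_mat r r'" "U' = K * U * X"
    using left_factor_transfer[OF K(1) L(1) M'] by blast
  obtain X' where X': "X' \<in> carrier_mat r' r" "U = K' * U' * X'"
    using swap.left_factor_transfer[OF K'(1) L'(1) M] by blast
  have "X * X' = 1\<^sub>m r"
    by (rule isometry_factor_inverse[OF F.U_carrier F'.U_carrier K(1) K'(1) X(1) X'(1) F.U_isometry K'(3) X(2) X'(2)])
  moreover have "X' * X = 1\<^sub>m r'"
    by (rule isometry_factor_inverse[OF F'.U_carrier F.U_carrier K'(1) K(1) X'(1) X(1) F'.U_isometry K'(2) X'(2) X(2)])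
  ultimately show ?thesis using X X' by blast
qed

lemma sandwich_transfer:
  assumes K: "K \<in> carrier_mat n n" "invertible_mat K" and L: "L \<in> carrier_mat m m" "invertible_mat L"
    and M': "U' * \<Lambda>' * adjoint V' = K * (U * \<Lambda> * adjoint V) * transpose_mat L"
  shows "r = r' \<and> (\<exists>P \<in> carrier_mat r r. \<exists>Q \<in> carrier_mat r r. invertible_mat P \<and> invertible_mat Q \<and>
    U' = K * U * transpose_mat P \<and> V' = conj_mat L * V * transpose_mat Q \<and>
    transpose_mat P * \<Lambda>' * conj_mat Q = \<Lambda>)"
proof -
  note carriers = F.U_carrier F.V_carrier F.\<Lambda>_carrier F'.U_carrier F'.V_carrier F'.\<Lambda>_carrier K(1) L(1)
  obtain X X' where X: "X \<in> carrier_mat r r'" "X' \<in> carrier_mat r' r" "X * X' = 1\<^sub>m r" "X' * X = 1\<^sub>m r'"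
      and U': "U' = K * U * X"
    using left_factor_transfer_invertible[OF K L M'] by blast
  interpret adj: thin_factorization_pair V U \<Lambda> V' U' \<Lambda>' m n r r'
    by unfold_locales (use F.thin_factorization_axioms F'.thin_factorization_axioms
        in \<open>auto simp: thin_factorization_def\<close>)
  have "V' * \<Lambda>' * adjoint U' = conj_mat L * (V * \<Lambda> * adjoint U) * transpose_mat (conj_mat K)"
    using arg_cong[OF M', of adjoint] carriers F.hermitian_\<Lambda> F'.hermitian_\<Lambda>
    by (simp add: adjoint_mult mult_assoc_dims)
  moreover have "conj_mat L \<in> carrier_mat m m" "invertible_mat (conj_mat L)"
    "conj_mat K \<in> carrier_mat n n" "invertible_mat (conj_mat K)"
    using K L invertible_conj_mat by auto
  ultimately obtain Y Y' where Y: "Y \<in> carrier_mat r r'" "Y' \<in> carrier_mat r' r" "Y * Y' = 1\<^sub>m r" "Y' * Y = 1\<^sub>m r'"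
      and V': "V' = conj_mat L * V * Y"
    using adj.left_factor_transfer_invertible by blast
  have r: "r = r'"
    using two_sided_inverse_square X by blast
  have "K * U * (X * \<Lambda>' * adjoint Y) * adjoint V * transpose_mat L = U' * \<Lambda>' * adjoint V'"
    unfolding U' V' using carriers X Y by (simp add: adjoint_mult mult_assoc_dims)
  also have "\<dots> = K * U * \<Lambda> * adjoint V * transpose_mat L"
    unfolding M' using carriers by (simp add: mult_assoc_dims)
  finally have sandwiched: "K * U * (X * \<Lambda>' * adjoint Y) * adjoint V * transpose_mat L
      = K * U * \<Lambda> * adjoint V * transpose_mat L" .
  have \<Lambda>: "X * \<Lambda>' * adjoint Y = \<Lambda>"
    by (rule F.sandwich_cancel[OF K L _ F.\<Lambda>_carrier sandwiched]) (use X Y F'.\<Lambda>_carrier r in auto)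
  have "invertible_mat X" "invertible_mat Y"
    using X Y r invertible_mat_iff_two_sided by auto
  then have "invertible_mat (transpose_mat X)" "invertible_mat (transpose_mat Y)"
    using X Y r invertible_transpose_mat by auto
  then show ?thesis
    using r X Y U' V' \<Lambda> by (intro conjI bexI[of _ "transpose_mat X"] bexI[of _ "transpose_mat Y"]) auto
qed

lemma sandwich_transfer_converse:
  assumes "r = r'" and K: "K \<in> carrier_mat n n" and L: "L \<in> carrier_mat m m"
    and P: "P \<in> carrier_mat r r" and Q: "Q \<in> carrier_mat r r"
    and U': "U' = K * U * transpose_mat P" and V': "V' = conj_mat L * V * transpose_mat Q"
    and \<Lambda>: "transpose_mat P * \<Lambda>' * conj_mat Q = \<Lambda>"
  shows "U' * \<Lambda>' * adjoint V' = K * (U * \<Lambda> * adjoint V) * transpose_mat L"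
  using assms F.U_carrier F.V_carrier F'.\<Lambda>_carrier unfolding U' V' \<Lambda>[symmetric]
  by (simp add: adjoint_mult mult_assoc_dims)

end

section \<open>Flattening multipartite states\<close>

definition mat23 :: "nat \<Rightarrow> nat \<Rightarrow> nat \<Rightarrow> (nat \<Rightarrow> nat \<Rightarrow> nat \<Rightarrow> complex) \<Rightarrow> complex mat" where
  "mat23 a b r \<Gamma> = mat (a * b) r (\<lambda>(x, k). \<Gamma> k (x div b) (x mod b))"

lemma mat1234_carrier [simp]: "mat1234 I1 I2 I3 I4 \<psi> \<in> carrier_mat (I1 * I2) (I3 * I4)"
  and mat23_carrier [simp]: "mat23 a b r \<Gamma> \<in> carrier_mat (a * b) r"
  by (simp_all add: mat1234_def mat23_def)

lemma index_mat1234_pair [simp]: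
  "i1 < I1 \<Longrightarrow> i2 < I2 \<Longrightarrow> i3 < I3 \<Longrightarrow> i4 < I4 \<Longrightarrow>
   mat1234 I1 I2 I3 I4 \<psi> $$ (i1 * I2 + i2, i3 * I4 + i4) = \<psi> i1 i2 i3 i4"
  by (simp add: mat1234_def pair_index_less)

lemma index_mat23_pair [simp]:
  "i < a \<Longrightarrow> j < b \<Longrightarrow> k < r \<Longrightarrow> mat23 a b r \<Gamma> $$ (i * b + j, k) = \<Gamma> k i j"
  by (simp add: mat23_def pair_index_less)

lemma state_eq4_iff_mat1234:
  "state_eq4 I1 I2 I3 I4 \<phi> \<psi> \<longleftrightarrow> mat1234 I1 I2 I3 I4 \<phi> = mat1234 I1 I2 I3 I4 \<psi>"
proof
  assume eq: "mat1234 I1 I2 I3 I4 \<phi> = mat1234 I1 I2 I3 I4 \<psi>"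
  show "state_eq4 I1 I2 I3 I4 \<phi> \<psi>"
    unfolding state_eq4_def by (metis eq index_mat1234_pair)
next
  assume "state_eq4 I1 I2 I3 I4 \<phi> \<psi>"
  then show "mat1234 I1 I2 I3 I4 \<phi> = mat1234 I1 I2 I3 I4 \<psi>"
    by (intro eq_matI) (auto simp: mat1234_def state_eq4_def pair_index_div_less pair_index_mod_less)
qed

lemma state_eq3_iff_mat23: "state_eq3 r a b \<phi> \<psi> \<longleftrightarrow> mat23 a b r \<phi> = mat23 a b r \<psi>"
proof
  assume eq: "mat23 a b r \<phi> = mat23 a b r \<psi>"
  show "state_eq3 r a b \<phi> \<psi>"
    unfolding state_eq3_def by (metis eq index_mat23_pair)
next
  assume "state_eq3 r a b \<phi> \<psi>"
  then show "mat23 a b r \<phi> = mat23 a b r \<psi>"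
    by (intro eq_matI) (auto simp: mat23_def state_eq3_def pair_index_div_less pair_index_mod_less)
qed

lemma mat1234_apply4:
  assumes "A1 \<in> carrier_mat I1 I1" "A2 \<in> carrier_mat I2 I2" "A3 \<in> carrier_mat I3 I3" "A4 \<in> carrier_mat I4 I4"
  shows "mat1234 I1 I2 I3 I4 (apply4 A1 A2 A3 A4 \<psi>)
    = kron I1 I2 A1 A2 * mat1234 I1 I2 I3 I4 \<psi> * transpose_mat (kron I3 I4 A3 A4)"
proof (rule eq_matI)
  fix x y assume "x < dim_row (kron I1 I2 A1 A2 * mat1234 I1 I2 I3 I4 \<psi> * transpose_mat (kron I3 I4 A3 A4))"
    "y < dim_col (kron I1 I2 A1 A2 * mat1234 I1 I2 I3 I4 \<psi> * transpose_mat (kron I3 I4 A3 A4))"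
  then have "x < I1 * I2" "y < I3 * I4" by auto
  then obtain i1 i2 i3 i4 where x: "x = i1 * I2 + i2" "i1 < I1" "i2 < I2"
    and y: "y = i3 * I4 + i4" "i3 < I3" "i4 < I4"
    by (metis pair_index_cases)
  have "(kron I1 I2 A1 A2 * mat1234 I1 I2 I3 I4 \<psi> * transpose_mat (kron I3 I4 A3 A4)) $$ (x, y)
    = (\<Sum>j1<I1. \<Sum>j2<I2. \<Sum>j3<I3. \<Sum>j4<I4.
        A1 $$ (i1, j1) * A2 $$ (i2, j2) * \<psi> j1 j2 j3 j4 * (A3 $$ (i3, j3) * A4 $$ (i4, j4)))"
    using assms x y
    by (subst index_mult_transpose_sandwich[of _ "I1 * I2" "I1 * I2" _ "I3 * I4" _ "I3 * I4"])
      (auto simp: sum_lessThan_mult_pairs pair_index_less intro!: sum.cong)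
  also have "\<dots> = apply4 A1 A2 A3 A4 \<psi> i1 i2 i3 i4"
    using assms by (simp add: apply4_def ac_simps)
  finally show "mat1234 I1 I2 I3 I4 (apply4 A1 A2 A3 A4 \<psi>) $$ (x, y)
    = (kron I1 I2 A1 A2 * mat1234 I1 I2 I3 I4 \<psi> * transpose_mat (kron I3 I4 A3 A4)) $$ (x, y)"
    using x y by simp
qed (auto simp: mat1234_def)

lemma mat23_apply3:
  assumes "P \<in> carrier_mat r r" "Y \<in> carrier_mat a a" "Z \<in> carrier_mat b b"
  shows "mat23 a b r (apply3 P Y Z \<Gamma>) = kron a b Y Z * mat23 a b r \<Gamma> * transpose_mat P"
proof (rule eq_matI)
  fix x k assume "x < dim_row (kron a b Y Z * mat23 a b r \<Gamma> * transpose_mat P)"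
    "k < dim_col (kron a b Y Z * mat23 a b r \<Gamma> * transpose_mat P)"
  then have "x < a * b" and k: "k < r" using assms(1) by auto
  then obtain i j where x: "x = i * b + j" "i < a" "j < b"
    by (metis pair_index_cases)
  have "(kron a b Y Z * mat23 a b r \<Gamma> * transpose_mat P) $$ (x, k)
    = (\<Sum>i'<a. \<Sum>j'<b. \<Sum>k'<r. Y $$ (i, i') * Z $$ (j, j') * \<Gamma> k' i' j' * P $$ (k, k'))"
    using assms x k
    by (subst index_mult_transpose_sandwich[of _ "a * b" "a * b" _ r _ r])
      (auto simp: sum_lessThan_mult_pairs pair_index_less intro!: sum.cong)
  also have "\<dots> = apply3 P Y Z \<Gamma> k i j"
    using assms by (simp add: apply3_def sum.swap[of _ "{..<r}"] ac_simps)
  finally show "mat23 a b r (apply3 P Y Z \<Gamma>) $$ (x, k) = (kron a b Y Z * mat23 a b r \<Gamma> * transpose_mat P) $$ (x, k)"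
    using x k by simp
qed (use assms in \<open>auto simp: mat23_def\<close>)

lemma mat23_psi_u: "mat23 a b r (psi_u b U) = first_cols (a * b) r U"
  by (rule eq_matI) (auto simp: mat23_def psi_u_def first_cols_def)

lemma psi_v_eq_psi_u: "psi_v = psi_u"
  by (simp add: fun_eq_iff psi_u_def psi_v_def)

lemma triple_state_relation_iff:
  assumes A1: "A1 \<in> carrier_mat I1 I1" and A2: "A2 \<in> carrier_mat I2 I2"
    and A3: "A3 \<in> carrier_mat I3 I3" and A4: "A4 \<in> carrier_mat I4 I4"
    and P: "P \<in> carrier_mat r r" and Q: "Q \<in> carrier_mat r r"
  shows "state_eq3 r I1 I2 (psi_u I2 U') (apply3 P A1 A2 (psi_u I2 U)) \<and>
      state_eq3 r I3 I4 (psi_v I4 V') (apply3 Q (conj_mat A3) (conj_mat A4) (psi_v I4 V)) \<and>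
      apply2 (transpose_mat P) (adjoint Q) \<Lambda>' = \<Lambda>
    \<longleftrightarrow> first_cols (I1 * I2) r U' = kron I1 I2 A1 A2 * first_cols (I1 * I2) r U * transpose_mat P \<and>
      first_cols (I3 * I4) r V' = conj_mat (kron I3 I4 A3 A4) * first_cols (I3 * I4) r V * transpose_mat Q \<and>
      transpose_mat P * \<Lambda>' * conj_mat Q = \<Lambda>"
  using assms
  by (simp add: psi_v_eq_psi_u state_eq3_iff_mat23 mat23_apply3 mat23_psi_u conj_mat_kron apply2_def)

locale SLOCC_triple_states =
  fixes I1 I2 I3 I4 r r' :: nat and \<psi> \<psi>' :: "nat \<Rightarrow> nat \<Rightarrow> nat \<Rightarrow> nat \<Rightarrow> complex"
    and U V U' V' :: "complex mat" and lam lam' :: "nat \<Rightarrow> real"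
  assumes svd: "is_svd (mat1234 I1 I2 I3 I4 \<psi>) U V r lam"
    and svd': "is_svd (mat1234 I1 I2 I3 I4 \<psi>') U' V' r' lam'"
begin

lemmas thin = is_svd_thin[OF svd mat1234_carrier] and thin' = is_svd_thin[OF svd' mat1234_carrier]

sublocale thin_factorization_pair
  "first_cols (I1 * I2) r U" "first_cols (I3 * I4) r V" "psi_lam r lam"
  "first_cols (I1 * I2) r' U'" "first_cols (I3 * I4) r' V'" "psi_lam r' lam'" "I1 * I2" "I3 * I4" r r'
  using thin thin' by unfold_locales auto

lemma state_eq4_apply4_iff:
  assumes "A1 \<in> carrier_mat I1 I1" "A2 \<in> carrier_mat I2 I2" "A3 \<in> carrier_mat I3 I3" "A4 \<in> carrier_mat I4 I4"
  shows "state_eq4 I1 I2 I3 I4 \<psi>' (apply4 A1 A2 A3 A4 \<psi>) \<longleftrightarrow>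
    first_cols (I1 * I2) r' U' * psi_lam r' lam' * adjoint (first_cols (I3 * I4) r' V')
    = kron I1 I2 A1 A2 * (first_cols (I1 * I2) r U * psi_lam r lam * adjoint (first_cols (I3 * I4) r V))
      * transpose_mat (kron I3 I4 A3 A4)"
  using assms thin(1) thin'(1) by (simp add: state_eq4_iff_mat1234 mat1234_apply4)

lemma triple_relation_imp_SLOCC:
  assumes "r = r'"
    and A: "A1 \<in> carrier_mat I1 I1" "A2 \<in> carrier_mat I2 I2" "A3 \<in> carrier_mat I3 I3" "A4 \<in> carrier_mat I4 I4"
    and PQ: "P \<in> carrier_mat r r" "Q \<in> carrier_mat r r"
    and "state_eq3 r I1 I2 (psi_u I2 U') (apply3 P A1 A2 (psi_u I2 U))"
    and "state_eq3 r I3 I4 (psi_v I4 V') (apply3 Q (conj_mat A3) (conj_mat A4) (psi_v I4 V))"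
    and "apply2 (transpose_mat P) (adjoint Q) (psi_lam r' lam') = psi_lam r lam"
  shows "state_eq4 I1 I2 I3 I4 \<psi>' (apply4 A1 A2 A3 A4 \<psi>)"
proof -
  have rel: "first_cols (I1 * I2) r U' = kron I1 I2 A1 A2 * first_cols (I1 * I2) r U * transpose_mat P \<and>
      first_cols (I3 * I4) r V' = conj_mat (kron I3 I4 A3 A4) * first_cols (I3 * I4) r V * transpose_mat Q \<and>
      transpose_mat P * psi_lam r' lam' * conj_mat Q = psi_lam r lam"
    using assms(8-10) triple_state_relation_iff[OF A PQ] by blast
  have "first_cols (I1 * I2) r' U' * psi_lam r' lam' * adjoint (first_cols (I3 * I4) r' V')
    = kron I1 I2 A1 A2 * (first_cols (I1 * I2) r U * psi_lam r lam * adjoint (first_cols (I3 * I4) r V))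
      * transpose_mat (kron I3 I4 A3 A4)"
    by (rule sandwich_transfer_converse[OF \<open>r = r'\<close> kron_carrier kron_carrier PQ])
      (use rel \<open>r = r'\<close> in simp_all)
  then show ?thesis
    using state_eq4_apply4_iff[OF A] by blast
qed

lemma SLOCC_equiv_iff_triple_relation:
  "SLOCC_equiv4 I1 I2 I3 I4 \<psi>' \<psi> \<longleftrightarrow> r = r' \<and>
           (\<exists>A1 A2 A3 A4 P Q.
              A1 \<in> carrier_mat I1 I1 \<and> invertible_mat A1 \<and>
              A2 \<in> carrier_mat I2 I2 \<and> invertible_mat A2 \<and>
              A3 \<in> carrier_mat I3 I3 \<and> invertible_mat A3 \<and>
              A4 \<in> carrier_mat I4 I4 \<and> invertible_mat A4 \<and>
              P \<in> carrier_mat r r \<and> invertible_mat P \<and>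
              Q \<in> carrier_mat r r \<and> invertible_mat Q \<and>
              state_eq3 r I1 I2 (psi_u I2 U') (apply3 P A1 A2 (psi_u I2 U)) \<and>
              state_eq3 r I3 I4 (psi_v I4 V') (apply3 Q (conj_mat A3) (conj_mat A4) (psi_v I4 V)) \<and>
              apply2 (transpose_mat P) (adjoint Q) (psi_lam r' lam') = psi_lam r lam)"
    (is "_ \<longleftrightarrow> ?triple")
proof (rule iffI)
  assume "SLOCC_equiv4 I1 I2 I3 I4 \<psi>' \<psi>"
  then obtain A1 A2 A3 A4 where A: "A1 \<in> carrier_mat I1 I1" "invertible_mat A1"
    "A2 \<in> carrier_mat I2 I2" "invertible_mat A2" "A3 \<in> carrier_mat I3 I3" "invertible_mat A3"
    "A4 \<in> carrier_mat I4 I4" "invertible_mat A4" and "state_eq4 I1 I2 I3 I4 \<psi>' (apply4 A1 A2 A3 A4 \<psi>)"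
    unfolding SLOCC_equiv4_def by blast
  then have "first_cols (I1 * I2) r' U' * psi_lam r' lam' * adjoint (first_cols (I3 * I4) r' V')
    = kron I1 I2 A1 A2 * (first_cols (I1 * I2) r U * psi_lam r lam * adjoint (first_cols (I3 * I4) r V))
      * transpose_mat (kron I3 I4 A3 A4)"
    using state_eq4_apply4_iff by blast
  then have r: "r = r'" and "\<exists>P \<in> carrier_mat r r. \<exists>Q \<in> carrier_mat r r. invertible_mat P \<and> invertible_mat Q \<and>
    first_cols (I1 * I2) r' U' = kron I1 I2 A1 A2 * first_cols (I1 * I2) r U * transpose_mat P \<and>
    first_cols (I3 * I4) r' V' = conj_mat (kron I3 I4 A3 A4) * first_cols (I3 * I4) r V * transpose_mat Q \<and>
    transpose_mat P * psi_lam r' lam' * conj_mat Q = psi_lam r lam"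
    using sandwich_transfer[OF kron_carrier invertible_kron[OF A(1-4)] kron_carrier invertible_kron[OF A(5-8)]]
    by blast+
  then obtain P Q where PQ: "P \<in> carrier_mat r r" "invertible_mat P" "Q \<in> carrier_mat r r" "invertible_mat Q"
    and "first_cols (I1 * I2) r' U' = kron I1 I2 A1 A2 * first_cols (I1 * I2) r U * transpose_mat P"
    and "first_cols (I3 * I4) r' V' = conj_mat (kron I3 I4 A3 A4) * first_cols (I3 * I4) r V * transpose_mat Q"
    and "transpose_mat P * psi_lam r' lam' * conj_mat Q = psi_lam r lam"
    by blast
  with r triple_state_relation_iff[OF A(1,3,5,7) PQ(1,3)]
  have "state_eq3 r I1 I2 (psi_u I2 U') (apply3 P A1 A2 (psi_u I2 U)) \<and>
    state_eq3 r I3 I4 (psi_v I4 V') (apply3 Q (conj_mat A3) (conj_mat A4) (psi_v I4 V)) \<and>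
    apply2 (transpose_mat P) (adjoint Q) (psi_lam r' lam') = psi_lam r lam"
    by simp
  with r A PQ show ?triple
    by blast
next
  show "?triple \<Longrightarrow> SLOCC_equiv4 I1 I2 I3 I4 \<psi>' \<psi>"
    unfolding SLOCC_equiv4_def
    by (elim conjE exE, intro exI conjI; (assumption | rule triple_relation_imp_SLOCC; assumption))
qed

end

theorem theorem1:
  fixes I1 I2 I3 I4 r r' :: nat
    and \<psi> \<psi>' :: "nat \<Rightarrow> nat \<Rightarrow> nat \<Rightarrow> nat \<Rightarrow> complex"
    and U V U' V' :: "complex mat"
    and lam lam' :: "nat \<Rightarrow> real"
  assumes "nonzero4 I1 I2 I3 I4 \<psi>" and "nonzero4 I1 I2 I3 I4 \<psi>'"
    and "r = vec_space.rank (I1 * I2) (mat1234 I1 I2 I3 I4 \<psi>)"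
    and "r' = vec_space.rank (I1 * I2) (mat1234 I1 I2 I3 I4 \<psi>')"
    and "is_svd (mat1234 I1 I2 I3 I4 \<psi>) U V r lam"
    and "is_svd (mat1234 I1 I2 I3 I4 \<psi>') U' V' r' lam'"
  shows "(SLOCC_equiv4 I1 I2 I3 I4 \<psi>' \<psi> \<longleftrightarrow>
           r = r' \<and>
           (\<exists>A1 A2 A3 A4 P Q.
              A1 \<in> carrier_mat I1 I1 \<and> invertible_mat A1 \<and>
              A2 \<in> carrier_mat I2 I2 \<and> invertible_mat A2 \<and>
              A3 \<in> carrier_mat I3 I3 \<and> invertible_mat A3 \<and>
              A4 \<in> carrier_mat I4 I4 \<and> invertible_mat A4 \<and>
              P \<in> carrier_mat r r \<and> invertible_mat P \<and>
              Q \<in> carrier_mat r r \<and> invertible_mat Q \<and>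
              state_eq3 r I1 I2 (psi_u I2 U') (apply3 P A1 A2 (psi_u I2 U)) \<and>
              state_eq3 r I3 I4 (psi_v I4 V') (apply3 Q (conj_mat A3) (conj_mat A4) (psi_v I4 V)) \<and>
              apply2 (transpose_mat P) (adjoint Q) (psi_lam r' lam') = psi_lam r lam))
       \<and>
         (\<forall>A1 A2 A3 A4 P Q.
              r = r' \<and>
              A1 \<in> carrier_mat I1 I1 \<and> invertible_mat A1 \<and>
              A2 \<in> carrier_mat I2 I2 \<and> invertible_mat A2 \<and>
              A3 \<in> carrier_mat I3 I3 \<and> invertible_mat A3 \<and>
              A4 \<in> carrier_mat I4 I4 \<and> invertible_mat A4 \<and>
              P \<in> carrier_mat r r \<and> invertible_mat P \<and>
              Q \<in> carrier_mat r r \<and> invertible_mat Q \<and>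
              state_eq3 r I1 I2 (psi_u I2 U') (apply3 P A1 A2 (psi_u I2 U)) \<and>
              state_eq3 r I3 I4 (psi_v I4 V') (apply3 Q (conj_mat A3) (conj_mat A4) (psi_v I4 V)) \<and>
              apply2 (transpose_mat P) (adjoint Q) (psi_lam r' lam') = psi_lam r lam
            \<longrightarrow> state_eq4 I1 I2 I3 I4 \<psi>' (apply4 A1 A2 A3 A4 \<psi>))"
proof -
  interpret SLOCC_triple_states I1 I2 I3 I4 r r' \<psi> \<psi>' U V U' V' lam lam'
    using assms(5,6) by unfold_locales
  show ?thesis
    using SLOCC_equiv_iff_triple_relation triple_relation_imp_SLOCC by blast
qed

end
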